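(* Let $E_1|H_1$, $E_2|H_2$, $E_3|H_3$ be conditional events such that $\{E_1|H_1,E_2|H_2\}$ is p-consistent. Then $\{E_1|H_1,E_2|H_2\}$ p-entails $E_3|H_3$ if and only if $(E_3|H_3)\,|\,\big((E_1|H_1)\wedge(E_2|H_2)\big)=1$. *)

theory Defs
  imports Main "HOL.Real"
begin

text \<open>A conditional random quantity in a prevision assessment is a
  triple (X, H, m): X gives its values on the conditioning event H, m is its assessed
  prevision. Coherence (betting scheme): for every nonempty finite subfamily J and all
  real stakes s, the random gain G = sum over j in J of s_j * H_j * (X_j - m_j),
  restricted to the union of the conditioning events of J, takes both a value <= 0 and
  a value >= 0 (i.e. min G <= 0 <= max G).\<close>

definition coherent :: "(('w \<Rightarrow> real) \<times> 'w set \<times> real) list \<Rightarrow> bool" where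
  "coherent F \<longleftrightarrow>
     (\<forall>J \<subseteq> {..<length F}. J \<noteq> {} \<longrightarrow>
       (\<forall>s :: nat \<Rightarrow> real.
          let G = (\<lambda>w. \<Sum>j\<in>J. s j *
                     (if w \<in> fst (snd (F ! j)) then fst (F ! j) w - snd (snd (F ! j)) else 0));
              H0 = (\<Union>j\<in>J. fst (snd (F ! j)))
          in (\<exists>w\<in>H0. G w \<le> 0) \<and> (\<exists>w\<in>H0. G w \<ge> 0)))"

definition ind :: "'w set \<Rightarrow> 'w \<Rightarrow> real" where
  "ind E w = (if w \<in> E then 1 else 0)"

definition cev :: "'w set \<Rightarrow> 'w set \<Rightarrow> real \<Rightarrow> ('w \<Rightarrow> real) \<times> 'w set \<times> real" where
  "cev E H p = (ind E, H, p)"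

definition p_consistent :: "('w set \<times> 'w set) list \<Rightarrow> bool" where
  "p_consistent F \<longleftrightarrow> coherent (map (\<lambda>(E, H). cev E H 1) F)"

definition p_entails :: "('w set \<times> 'w set) list \<Rightarrow> 'w set \<times> 'w set \<Rightarrow> bool" where
  "p_entails F C \<longleftrightarrow> p_consistent F \<and>
     (\<forall>z. coherent (map (\<lambda>(E, H). cev E H 1) F @ [cev (fst C) (snd C) z]) \<longrightarrow> z = 1)"

text \<open>Conjunction of the conditional events E_i|H_i, i in S (Gilio--Sanfilippo), as a
  random quantity: 0 if some E_i|H_i is false; 1 if all are true; x T if exactly the
  E_i|H_i with i in T (T nonempty) are void and the others true, where x T is the
  assessed prevision of the conjunction over T (x {i} = P(E_i|H_i)).\<close>
definition conj_val :: "(nat \<Rightarrow> 'w set) \<Rightarrow> (nat \<Rightarrow> 'w set) \<Rightarrow> (nat set \<Rightarrow> real) \<Rightarrow> nat set \<Rightarrow> 'w \<Rightarrow> real" where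
  "conj_val E H x S w =
     (if \<exists>i\<in>S. w \<in> H i \<and> w \<notin> E i then 0
      else if {i\<in>S. w \<notin> H i} = {} then 1 else x {i\<in>S. w \<notin> H i})"

definition conj_rq :: "(nat \<Rightarrow> 'w set) \<Rightarrow> (nat \<Rightarrow> 'w set) \<Rightarrow> (nat set \<Rightarrow> real) \<Rightarrow> nat set
    \<Rightarrow> ('w \<Rightarrow> real) \<times> 'w set \<times> real" where
  "conj_rq E H x S = (conj_val E H x S, (\<Union>i\<in>S. H i), x S)"

definition iter_val :: "(nat \<Rightarrow> 'w set) \<Rightarrow> (nat \<Rightarrow> 'w set) \<Rightarrow> (nat set \<Rightarrow> real) \<Rightarrow> real \<Rightarrow> 'w \<Rightarrow> real" where
  "iter_val E H x \<mu> w = conj_val E H x {1,2,3} w + \<mu> * (1 - conj_val E H x {1,2} w)"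

text \<open>The bet on the iterated conditional is called off where the conditioning conjunction
  C12 is 0 (there iter_val - mu = C123 - mu*C12 vanishes).\<close>
definition iter_rq :: "(nat \<Rightarrow> 'w set) \<Rightarrow> (nat \<Rightarrow> 'w set) \<Rightarrow> (nat set \<Rightarrow> real) \<Rightarrow> real
    \<Rightarrow> ('w \<Rightarrow> real) \<times> 'w set \<times> real" where
  "iter_rq E H x \<mu> = (iter_val E H x \<mu>, {w. conj_val E H x {1,2} w \<noteq> 0}, \<mu>)"

definition iter_family :: "(nat \<Rightarrow> 'w set) \<Rightarrow> (nat \<Rightarrow> 'w set) \<Rightarrow> (nat set \<Rightarrow> real) \<Rightarrow> real
    \<Rightarrow> (('w \<Rightarrow> real) \<times> 'w set \<times> real) list" where
  "iter_family E H x \<mu> =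
     [conj_rq E H x {1}, conj_rq E H x {2}, conj_rq E H x {3},
      conj_rq E H x {1,2}, conj_rq E H x {1,3}, conj_rq E H x {2,3},
      conj_rq E H x {1,2,3}, iter_rq E H x \<mu>]"

text \<open>"(E3|H3)|((E1|H1) \<and> (E2|H2)) = 1": for every coherent prevision assessment under which
  the iterated conditional is defined (C12 not constantly 0), it is the constant 1.\<close>
definition iter_cond_eq_one :: "(nat \<Rightarrow> 'w set) \<Rightarrow> (nat \<Rightarrow> 'w set) \<Rightarrow> bool" where
  "iter_cond_eq_one E H \<longleftrightarrow>
     (\<forall>x \<mu>. coherent (iter_family E H x \<mu>) \<and> (\<exists>w. conj_val E H x {1,2} w \<noteq> 0)
        \<longrightarrow> (\<forall>w. iter_val E H x \<mu> w = 1))"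

end

theory Submission
  imports Defs
begin

text \<open>Both sides are equivalent to the Gilio--Sanfilippo condition: the quasi conjunction of some
  subfamily of \<open>{E\<^sub>1|H\<^sub>1, E\<^sub>2|H\<^sub>2}\<close> (possibly the empty one) is included in \<open>E\<^sub>3|H\<^sub>3\<close> in the sense
  of Goodman and Nguyen. If it holds, a bet on that quasi conjunction against \<open>E\<^sub>3|H\<^sub>3\<close> loses
  everywhere unless \<open>P(E\<^sub>3|H\<^sub>3) = 1\<close>; on the iterated side, coherence makes the conjunctions
  \<open>C\<^sub>1\<^sub>2\<^sub>3\<close> and \<open>C\<^sub>1\<^sub>2\<close> coincide, so the iterated conditional equals \<open>C\<^sub>1\<^sub>2 + \<mu> (1 - C\<^sub>1\<^sub>2)\<close> and a
  bet on it forces \<open>\<mu> = 1\<close>. If the condition fails, one assessment refutes both sides: prevision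
  1 for every conjunction avoiding \<open>E\<^sub>3|H\<^sub>3\<close>, 0 for every conjunction involving it, and
  \<open>\<mu> = 0\<close>. It is coherent because a short list of worlds, chosen from the failure of the
  condition, makes every bet fair at the first of them lying in its conditioning event.\<close>

section \<open>Bets and coherence\<close>

definition bet :: "('w \<Rightarrow> real) \<times> 'w set \<times> real \<Rightarrow> 'w \<Rightarrow> real" where
  "bet Q w = (if w \<in> fst (snd Q) then fst Q w - snd (snd Q) else 0)"

lemma bet_Pair [simp]: "bet (X, A, m) w = (if w \<in> A then X w - m else 0)"
  by (simp add: bet_def)

lemma coherent_iff_bets:
  "coherent F \<longleftrightarrow>
     (\<forall>J \<subseteq> {..<length F}. J \<noteq> {} \<longrightarrow> (\<forall>s.
        (\<exists>w\<in>(\<Union>j\<in>J. fst (snd (F ! j))). (\<Sum>j\<in>J. s j * bet (F ! j) w) \<le> 0) \<and>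
        (\<exists>w\<in>(\<Union>j\<in>J. fst (snd (F ! j))). 0 \<le> (\<Sum>j\<in>J. s j * bet (F ! j) w))))"
  unfolding coherent_def Let_def bet_def by (rule refl)

lemma coherent_gain_nonneg:
  assumes "coherent F" "J \<subseteq> {..<length F}" "J \<noteq> {}"
  shows "\<exists>w\<in>(\<Union>j\<in>J. fst (snd (F ! j))). 0 \<le> (\<Sum>j\<in>J. s j * bet (F ! j) w)"
  using assms unfolding coherent_iff_bets by blast

lemma coherent_two_bets:
  assumes "coherent F" "(X, A, m) \<in> set F" "(Y, B, n) \<in> set F"
  shows "\<exists>w\<in>A \<union> B. 0 \<le> s * bet (X, A, m) w + t * bet (Y, B, n) w"
proof -
  obtain a b where a: "a < length F" "F ! a = (X, A, m)" and b: "b < length F" "F ! b = (Y, B, n)"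
    using assms(2,3) by (metis in_set_conv_nth)
  show ?thesis
  proof (cases "a = b")
    case True
    obtain w where "w \<in> A" "0 \<le> (s + t) * bet (X, A, m) w"
      using coherent_gain_nonneg[OF assms(1), of "{a}" "\<lambda>_. s + t"] a by auto
    then show ?thesis
      using True a(2) b(2) by (auto simp: distrib_right)
  next
    case False
    then show ?thesis
      using coherent_gain_nonneg[OF assms(1), of "{a, b}" "\<lambda>j. if j = a then s else t"] a b
      by auto
  qed
qed

lemma coherent_prevision_bounds:
  assumes "coherent F" "(X, A, m) \<in> set F"
  shows "\<exists>w\<in>A. m \<le> X w" and "\<exists>w\<in>A. X w \<le> m"
  using coherent_two_bets[OF assms assms(2), of 1 0] coherent_two_bets[OF assms assms(2), of "-1" 0]
  by (auto split: if_splits)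

lemma coherent_prevision_eq:
  assumes "coherent F" "(X, A, m) \<in> set F" "(Y, B, n) \<in> set F"
    and "A \<subseteq> B" "\<forall>w\<in>A. Y w = X w" "\<forall>w\<in>B - A. Y w = m"
  shows "m = n"
proof -
  have diff: "bet (X, A, m) w - bet (Y, B, n) w = n - m" if "w \<in> A \<union> B" for w
    using that assms(4-6) by auto
  obtain u where "u \<in> A \<union> B" "0 \<le> 1 * bet (X, A, m) u + (- 1) * bet (Y, B, n) u"
    using coherent_two_bets[OF assms(1-3)] by blast
  moreover obtain v where "v \<in> A \<union> B" "0 \<le> (- 1) * bet (X, A, m) v + 1 * bet (Y, B, n) v"
    using coherent_two_bets[OF assms(1-3)] by blast
  ultimately show ?thesis
    using diff[of u] diff[of v] by linarith
qed

text \<open>At the first world of \<open>ws\<close> lying in some conditioning event of a subfamily, every bet of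
  that subfamily is fair, so every gain vanishes there.\<close>

fun fair_at_first :: "'w list \<Rightarrow> ('w \<Rightarrow> real) \<times> 'w set \<times> real \<Rightarrow> bool" where
  "fair_at_first [] Q \<longleftrightarrow> False"
| "fair_at_first (w # ws) Q \<longleftrightarrow> (if w \<in> fst (snd Q) then bet Q w = 0 else fair_at_first ws Q)"

lemma fair_at_first_common_world:
  assumes "J \<noteq> {}" "\<forall>j\<in>J. fair_at_first ws (Q j)"
  shows "\<exists>w\<in>(\<Union>j\<in>J. fst (snd (Q j))). \<forall>j\<in>J. bet (Q j) w = 0"
  using assms(2)
proof (induction ws)
  case Nil
  then show ?case using assms(1) by simp
next
  case (Cons w ws)
  show ?case
  proof (cases "w \<in> (\<Union>j\<in>J. fst (snd (Q j)))")
    case True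
    moreover have "\<forall>j\<in>J. bet (Q j) w = 0"
      using Cons.prems by (auto simp: bet_def)
    ultimately show ?thesis by blast
  next
    case False
    then show ?thesis using Cons by auto
  qed
qed

lemma coherent_if_fair_at_first:
  assumes "\<forall>Q\<in>set F. fair_at_first ws Q"
  shows "coherent F"
  unfolding coherent_iff_bets
proof (intro allI impI)
  fix J :: "nat set" and s :: "nat \<Rightarrow> real"
  assume J: "J \<subseteq> {..<length F}" "J \<noteq> {}"
  then have "\<forall>j\<in>J. fair_at_first ws (F ! j)"
    using assms by (auto simp: nth_mem subset_iff)
  then obtain w where w: "w \<in> (\<Union>j\<in>J. fst (snd (F ! j)))" and "\<forall>j\<in>J. bet (F ! j) w = 0"
    using fair_at_first_common_world[OF J(2), of ws "\<lambda>j. F ! j"] by blast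
  then have gain: "(\<Sum>j\<in>J. s j * bet (F ! j) w) = 0"
    by simp
  show "(\<exists>w\<in>(\<Union>j\<in>J. fst (snd (F ! j))). (\<Sum>j\<in>J. s j * bet (F ! j) w) \<le> 0) \<and>
      (\<exists>w\<in>(\<Union>j\<in>J. fst (snd (F ! j))). 0 \<le> (\<Sum>j\<in>J. s j * bet (F ! j) w))"
    using w gain by (intro conjI bexI[of _ w]) simp_all
qed

section \<open>Quasi conjunctions and p-entailment\<close>

text \<open>Goodman--Nguyen inclusion of the quasi conjunction of \<open>{E\<^sub>i|H\<^sub>i : i \<in> S}\<close> in \<open>E\<^sub>k|H\<^sub>k\<close>; for
  \<open>S = {}\<close> it says \<open>H\<^sub>k \<subseteq> E\<^sub>k\<close>. The four choices \<open>S \<subseteq> {1, 2}\<close> are the four cases of the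
  Gilio--Sanfilippo characterisation of p-entailment from two premises.\<close>

definition quasi_conj_implies :: "(nat \<Rightarrow> 'w set) \<Rightarrow> (nat \<Rightarrow> 'w set) \<Rightarrow> nat set \<Rightarrow> nat \<Rightarrow> bool" where
  "quasi_conj_implies E H S k \<longleftrightarrow>
     (\<forall>w. (\<exists>i\<in>S. w \<in> H i) \<and> (\<forall>i\<in>S. w \<in> H i \<longrightarrow> w \<in> E i) \<longrightarrow> w \<in> H k \<inter> E k) \<and>
     (\<forall>w\<in>H k - E k. \<exists>i\<in>S. w \<in> H i - E i)"

definition p_entailment_condition :: "(nat \<Rightarrow> 'w set) \<Rightarrow> (nat \<Rightarrow> 'w set) \<Rightarrow> bool" where
  "p_entailment_condition E H \<longleftrightarrow> (\<exists>S\<subseteq>{1, 2}. quasi_conj_implies E H S 3)"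

lemma subset_doubleton_cases:
  assumes "S \<subseteq> {a, b}"
  obtains "S = {}" | "S = {a}" | "S = {b}" | "S = {a, b}"
  using assms by (metis subset_insert_iff subset_singleton_iff insert_Diff)

lemma prevision_one_if_quasi_conj_implies:
  assumes coh: "coherent [cev (E 1) (H 1) 1, cev (E 2) (H 2) 1, cev (E 3) (H 3) z]"
    and "S \<subseteq> {1, 2}" and qc: "quasi_conj_implies E H S 3"
  shows "z = 1"
proof (rule antisym)
  obtain v where "z \<le> ind (E 3) v"
    using coherent_prevision_bounds(1)[OF coh, of "ind (E 3)" "H 3" z] by (auto simp: cev_def)
  then show "z \<le> 1"
    unfolding ind_def by (cases "v \<in> E 3") simp_all
  show "1 \<le> z"
  proof (rule ccontr)
    assume "\<not> 1 \<le> z"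
    \<comment> \<open>A unit bet on each \<open>E\<^sub>i|H\<^sub>i\<close> with \<open>i \<in> S\<close> against \<open>E\<^sub>3|H\<^sub>3\<close> then loses at every world.\<close>
    let ?F = "[cev (E 1) (H 1) 1, cev (E 2) (H 2) 1, cev (E 3) (H 3) z]"
    let ?J = "insert 2 ((\<lambda>i. i - 1) ` S)"
    have J: "?J \<subseteq> {..<length ?F}" "?J \<noteq> {}"
      using assms(2) by auto
    obtain w where "w \<in> (\<Union>j\<in>?J. fst (snd (?F ! j)))"
      "0 \<le> (\<Sum>j\<in>?J. (if j = 2 then - 1 else 1) * bet (?F ! j) w)"
      using coherent_gain_nonneg[OF coh J, of "\<lambda>j. if j = 2 then - 1 else 1"] by blast
    moreover have "(\<exists>i\<in>S. w \<in> H i) \<and> (\<forall>i\<in>S. w \<in> H i \<longrightarrow> w \<in> E i) \<longrightarrow> w \<in> H 3 \<inter> E 3"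
      "w \<in> H 3 - E 3 \<longrightarrow> (\<exists>i\<in>S. w \<in> H i - E i)"
      using qc unfolding quasi_conj_implies_def by blast+
    ultimately show False
      using \<open>\<not> 1 \<le> z\<close>
      by (cases rule: subset_doubleton_cases[OF assms(2)];
          cases "w \<in> H 1"; cases "w \<in> H 2"; cases "w \<in> H 3"; cases "w \<in> E 1"; cases "w \<in> E 2"; cases "w \<in> E 3")
        (simp_all add: cev_def ind_def)
  qed
qed

section \<open>The iterated conditional\<close>

lemma Collect_mem_insert:
  "{i \<in> insert a S. P i} = (if P a then insert a {i \<in> S. P i} else {i \<in> S. P i})"
  by auto

lemma conj_val_nonneg:
  assumes "\<And>T. T \<subseteq> S \<Longrightarrow> T \<noteq> {} \<Longrightarrow> 0 \<le> x T"
  shows "0 \<le> conj_val E H x S w"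
  using assms[of "{i \<in> S. w \<notin> H i}"] by (auto simp: conj_val_def)

lemma conj_val_outside_hyps:
  assumes "\<forall>i\<in>S. w \<notin> H i" "S \<noteq> {}"
  shows "conj_val E H x S w = x S"
proof -
  have "{i \<in> S. w \<notin> H i} = S"
    using assms(1) by auto
  with assms show ?thesis
    by (auto simp: conj_val_def)
qed

lemma iter_family_members:
  "i \<in> {1, 2, 3} \<Longrightarrow> (conj_val E H x {i}, H i, x {i}) \<in> set (iter_family E H x \<mu>)"
  "i \<in> {1, 2} \<Longrightarrow> (conj_val E H x {i, 3}, H i \<union> H 3, x {i, 3}) \<in> set (iter_family E H x \<mu>)"
  "(conj_val E H x {1, 2}, H 1 \<union> H 2, x {1, 2}) \<in> set (iter_family E H x \<mu>)"
  "(conj_val E H x {1, 2, 3}, H 1 \<union> H 2 \<union> H 3, x {1, 2, 3}) \<in> set (iter_family E H x \<mu>)"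
  "(iter_val E H x \<mu>, {w. conj_val E H x {1, 2} w \<noteq> 0}, \<mu>) \<in> set (iter_family E H x \<mu>)"
  by (auto simp: iter_family_def conj_rq_def iter_rq_def Un_assoc)

lemma conj12_nonneg:
  assumes coh: "coherent (iter_family E H x \<mu>)"
  shows "0 \<le> conj_val E H x {1, 2} w"
proof -
  have single: "0 \<le> x {i}" if i: "i \<in> {1, 2, 3}" for i
  proof -
    obtain v where v: "v \<in> H i" "conj_val E H x {i} v \<le> x {i}"
      using coherent_prevision_bounds(2)[OF coh iter_family_members(1)[OF i]] by blast
    then have "conj_val E H x {i} v \<in> {0, 1}"
      by (simp add: conj_val_def)
    with v(2) show ?thesis by auto
  qed
  have pair: "0 \<le> x {1, 2}"
  proof -
    obtain v where v: "v \<in> H 1 \<union> H 2" "conj_val E H x {1, 2} v \<le> x {1, 2}"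
      using coherent_prevision_bounds(2)[OF coh iter_family_members(3)] by blast
    then have "conj_val E H x {1, 2} v \<in> {0, 1, x {1}, x {2}}"
      unfolding conj_val_def Collect_mem_insert by auto
    with v(2) single[of 1] single[of 2] show ?thesis by auto
  qed
  show ?thesis
  proof (rule conj_val_nonneg)
    fix T :: "nat set"
    assume "T \<subseteq> {1, 2}" "T \<noteq> {}"
    then show "0 \<le> x T"
      using single[of 1] single[of 2] pair by (cases rule: subset_doubleton_cases) auto
  qed
qed

lemma iter_val_eq_one_if_conj123_eq_conj12:
  assumes coh: "coherent (iter_family E H x \<mu>)"
    and eq: "\<And>v. conj_val E H x {1, 2, 3} v = conj_val E H x {1, 2} v"
  shows "iter_val E H x \<mu> w = 1"
proof -
  let ?C = "conj_val E H x {1, 2}"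
  have iter: "iter_val E H x \<mu> v - \<mu> = ?C v * (1 - \<mu>)" for v
    unfolding iter_val_def eq by (simp add: algebra_simps)
  obtain p where p: "?C p \<noteq> 0" "\<mu> \<le> iter_val E H x \<mu> p"
    using coherent_prevision_bounds(1)[OF coh iter_family_members(5)] by auto
  obtain q where q: "?C q \<noteq> 0" "iter_val E H x \<mu> q \<le> \<mu>"
    using coherent_prevision_bounds(2)[OF coh iter_family_members(5)] by auto
  have "0 < ?C p" "0 < ?C q"
    using p(1) q(1) conj12_nonneg[OF coh] by (simp_all add: order_less_le)
  moreover have "0 \<le> ?C p * (1 - \<mu>)" "?C q * (1 - \<mu>) \<le> 0"
    using p(2) q(2) iter[of p] iter[of q] by linarith+
  ultimately have "\<mu> = 1"
    by (simp add: zero_le_mult_iff mult_le_0_iff)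
  then show ?thesis
    unfolding iter_val_def eq by simp
qed

lemma conj123_eq_conj12_if_eq_on_hyps:
  assumes coh: "coherent (iter_family E H x \<mu>)"
    and on_hyps: "\<forall>v\<in>H 1 \<union> H 2 \<union> H 3. conj_val E H x {1, 2, 3} v = conj_val E H x {1, 2} v"
  shows "conj_val E H x {1, 2, 3} w = conj_val E H x {1, 2} w"
proof -
  note outside = conj_val_outside_hyps[where E = E and H = H and x = x]
  have "x {1, 2} = x {1, 2, 3}"
  proof (rule coherent_prevision_eq[OF coh iter_family_members(3,4)])
    show "\<forall>v\<in>H 1 \<union> H 2 \<union> H 3 - (H 1 \<union> H 2). conj_val E H x {1, 2, 3} v = x {1, 2}"
    proof
      fix v
      assume "v \<in> H 1 \<union> H 2 \<union> H 3 - (H 1 \<union> H 2)"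
      then show "conj_val E H x {1, 2, 3} v = x {1, 2}"
        using on_hyps outside[of "{1, 2}" v] by auto
    qed
  qed (use on_hyps in auto)
  moreover have "conj_val E H x {1, 2} w = x {1, 2}" "conj_val E H x {1, 2, 3} w = x {1, 2, 3}"
    if "w \<notin> H 1 \<union> H 2 \<union> H 3"
    using that outside[of "{1, 2}" w] outside[of "{1, 2, 3}" w] by auto
  ultimately show ?thesis
    using on_hyps by (cases "w \<in> H 1 \<union> H 2 \<union> H 3") auto
qed

lemma prevision_conj3_eq_one:
  assumes coh: "coherent (iter_family E H x \<mu>)" and "H 3 \<subseteq> E 3"
  shows "x {3} = 1"
proof -
  have one: "conj_val E H x {3} v = 1" if "v \<in> H 3" for v
    using that assms(2) by (auto simp: conj_val_def)
  obtain a where "a \<in> H 3" "conj_val E H x {3} a \<le> x {3}"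
    using coherent_prevision_bounds(2)[OF coh iter_family_members(1)] by blast
  moreover obtain b where "b \<in> H 3" "x {3} \<le> conj_val E H x {3} b"
    using coherent_prevision_bounds(1)[OF coh iter_family_members(1)] by blast
  ultimately show ?thesis
    using one[of a] one[of b] by linarith
qed

lemma prevision_conj_absorbs_3:
  assumes coh: "coherent (iter_family E H x \<mu>)" and i: "i \<in> {1, 2}"
    and incl: "quasi_conj_implies E H {i} 3 \<or> H 3 \<subseteq> E 3 \<and> x {3} = 1"
  shows "x {i, 3} = x {i}"
proof -
  have "i \<noteq> 3" using i by auto
  have at: "(w \<in> H i \<inter> E i \<longrightarrow> w \<in> H 3 \<inter> E 3) \<and> (w \<in> H 3 - E 3 \<longrightarrow> w \<in> H i - E i)
      \<or> (w \<in> H 3 \<longrightarrow> w \<in> E 3) \<and> x {3} = 1" for w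
    using incl unfolding quasi_conj_implies_def by blast
  have "x {i} = x {i, 3}"
  proof (rule coherent_prevision_eq[OF coh iter_family_members(1,2)])
    show "\<forall>w\<in>H i. conj_val E H x {i, 3} w = conj_val E H x {i} w"
    proof
      fix w assume "w \<in> H i"
      with at[of w] \<open>i \<noteq> 3\<close> show "conj_val E H x {i, 3} w = conj_val E H x {i} w"
        unfolding conj_val_def Collect_mem_insert
        by (cases "w \<in> E i"; cases "w \<in> H 3"; cases "w \<in> E 3") simp_all
    qed
    show "\<forall>w\<in>H i \<union> H 3 - H i. conj_val E H x {i, 3} w = x {i}"
    proof
      fix w assume "w \<in> H i \<union> H 3 - H i"
      with at[of w] \<open>i \<noteq> 3\<close> show "conj_val E H x {i, 3} w = x {i}"
        unfolding conj_val_def Collect_mem_insert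
        by (cases "w \<in> H 3"; cases "w \<in> E 3") simp_all
    qed
  qed (use i in auto)
  then show ?thesis ..
qed

lemma conj123_eq_conj12_if_quasi_conj_implies:
  assumes coh: "coherent (iter_family E H x \<mu>)"
    and S: "S \<subseteq> {1, 2}" and qc: "quasi_conj_implies E H S 3"
  shows "conj_val E H x {1, 2, 3} w = conj_val E H x {1, 2} w"
proof (rule conj123_eq_conj12_if_eq_on_hyps[OF coh], intro ballI)
  fix v assume v: "v \<in> H 1 \<union> H 2 \<union> H 3"
  have qc_v: "(\<exists>i\<in>S. v \<in> H i) \<and> (\<forall>i\<in>S. v \<in> H i \<longrightarrow> v \<in> E i) \<longrightarrow> v \<in> H 3 \<inter> E 3"
    "v \<in> H 3 - E 3 \<longrightarrow> (\<exists>i\<in>S. v \<in> H i - E i)"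
    using qc unfolding quasi_conj_implies_def by blast+
  have H3: "H 3 \<subseteq> E 3" if "S = {}"
    using qc that by (auto simp: quasi_conj_implies_def)
  have x3: "S = {} \<longrightarrow> x {3} = 1"
    using prevision_conj3_eq_one[OF coh H3] by blast
  have absorbs: "S \<subseteq> {i} \<longrightarrow> x {i, 3} = x {i}" if "i \<in> {1, 2}" for i
    using prevision_conj_absorbs_3[OF coh that] qc H3 x3 by (auto simp: subset_singleton_iff)
  from v qc_v x3 absorbs[of 1] absorbs[of 2]
  show "conj_val E H x {1, 2, 3} v = conj_val E H x {1, 2} v"
    unfolding conj_val_def Collect_mem_insert
    by (cases rule: subset_doubleton_cases[OF S];
        cases "v \<in> H 1"; cases "v \<in> H 2"; cases "v \<in> H 3"; cases "v \<in> E 1"; cases "v \<in> E 2"; cases "v \<in> E 3")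
      simp_all
qed

section \<open>A coherent counter-assessment\<close>

lemma p_consistent_witnesses:
  assumes "p_consistent [(E 1, H 1), (E 2, H 2)]"
  obtains t1 t2 g where "t1 \<in> H 1" "t1 \<in> E 1" and "t2 \<in> H 2" "t2 \<in> E 2"
    and "g \<in> H 1 \<union> H 2" "g \<in> H 1 \<longrightarrow> g \<in> E 1" "g \<in> H 2 \<longrightarrow> g \<in> E 2"
proof -
  have coh: "coherent [cev (E 1) (H 1) 1, cev (E 2) (H 2) 1]"
    using assms by (simp add: p_consistent_def)
  have member: "(ind (E 1), H 1, 1) \<in> set [cev (E 1) (H 1) 1, cev (E 2) (H 2) 1]"
    "(ind (E 2), H 2, 1) \<in> set [cev (E 1) (H 1) 1, cev (E 2) (H 2) 1]"
    by (simp_all add: cev_def)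
  obtain t1 where "t1 \<in> H 1" "t1 \<in> E 1"
    using coherent_prevision_bounds(1)[OF coh member(1)] by (auto simp: ind_def split: if_splits)
  moreover obtain t2 where "t2 \<in> H 2" "t2 \<in> E 2"
    using coherent_prevision_bounds(1)[OF coh member(2)] by (auto simp: ind_def split: if_splits)
  moreover obtain g where "g \<in> H 1 \<union> H 2"
    "0 \<le> 1 * bet (ind (E 1), H 1, 1) g + 1 * bet (ind (E 2), H 2, 1) g"
    using coherent_two_bets[OF coh member] by blast
  then have "g \<in> H 1 \<union> H 2 \<and> (g \<in> H 1 \<longrightarrow> g \<in> E 1) \<and> (g \<in> H 2 \<longrightarrow> g \<in> E 2)"
    unfolding ind_def by (cases "g \<in> H 1"; cases "g \<in> H 2"; cases "g \<in> E 1"; cases "g \<in> E 2") simp_all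
  ultimately show ?thesis
    using that by blast
qed

lemma not_quasi_conj_implies_witness:
  assumes "\<not> quasi_conj_implies E H S k"
  obtains w where "(\<exists>i\<in>S. w \<in> H i) \<and> (\<forall>i\<in>S. w \<in> H i \<longrightarrow> w \<in> E i) \<and> w \<notin> H k \<inter> E k
    \<or> w \<in> H k - E k \<and> (\<forall>i\<in>S. w \<notin> H i - E i)"
  using assms unfolding quasi_conj_implies_def by blast

definition counter_prevision :: "nat set \<Rightarrow> real" where
  "counter_prevision T = (if 3 \<in> T then 0 else 1)"

abbreviation counter_assessment :: "(nat \<Rightarrow> 'w set) \<Rightarrow> (nat \<Rightarrow> 'w set) \<Rightarrow> (('w \<Rightarrow> real) \<times> 'w set \<times> real) list" where
  "counter_assessment E H \<equiv>
     [cev (E 1) (H 1) 1, cev (E 2) (H 2) 1, cev (E 3) (H 3) 0] @ iter_family E H counter_prevision 0"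

lemmas counter_assessment_simps = iter_family_def conj_rq_def iter_rq_def iter_val_def
  counter_prevision_def conj_val_def Collect_mem_insert cev_def ind_def

lemma fair_sequence_if_conclusion_false:
  assumes w: "w \<in> H 3 - E 3" "w \<in> H 1 \<longrightarrow> w \<in> E 1" "w \<in> H 2 \<longrightarrow> w \<in> E 2"
    and g: "g \<in> H 1 \<union> H 2" "g \<in> H 1 \<longrightarrow> g \<in> E 1" "g \<in> H 2 \<longrightarrow> g \<in> E 2"
    and t1: "t1 \<in> H 1" "t1 \<in> E 1" and t2: "t2 \<in> H 2" "t2 \<in> E 2"
  obtains ws where "\<forall>Q\<in>set (counter_assessment E H). fair_at_first ws Q"
proof (cases "g \<in> H 2")
  case True
  with w g t1 show ?thesis
    by (intro that[of "[w, g, t1]"]) (auto simp: counter_assessment_simps)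
next
  case False
  with w g t2 show ?thesis
    by (intro that[of "[w, g, t2]"]) (auto simp: counter_assessment_simps)
qed

lemma fair_sequence_if_conclusion_void:
  assumes w: "w \<in> H 1 \<union> H 2" "w \<in> H 1 \<longrightarrow> w \<in> E 1" "w \<in> H 2 \<longrightarrow> w \<in> E 2" "w \<notin> H 3"
    and f: "f \<in> H 3" "f \<notin> E 3"
    and u1: "u1 \<in> H 1 \<inter> E 1 \<and> u1 \<notin> H 3 \<inter> E 3 \<or> u1 \<in> H 3 - E 3 \<and> u1 \<notin> H 1 - E 1"
    and u2: "u2 \<in> H 2 \<inter> E 2 \<and> u2 \<notin> H 3 \<inter> E 3 \<or> u2 \<in> H 3 - E 3 \<and> u2 \<notin> H 2 - E 2"
    and t1: "t1 \<in> H 1" "t1 \<in> E 1" and t2: "t2 \<in> H 2" "t2 \<in> E 2"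
  obtains ws where "\<forall>Q\<in>set (counter_assessment E H). fair_at_first ws Q"
proof -
  consider "w \<in> H 1" "w \<in> H 2" | "w \<in> H 1" "w \<notin> H 2" "u2 \<in> H 3" | "w \<in> H 1" "w \<notin> H 2" "u2 \<notin> H 3"
    | "w \<notin> H 1" "u1 \<in> H 3" | "w \<notin> H 1" "u1 \<notin> H 3"
    by blast
  then show ?thesis
  proof cases
    case 1
    with w f show ?thesis
      by (intro that[of "[w, f]"]) (auto simp: counter_assessment_simps)
  next
    case 2
    with w u2 t2 show ?thesis
      by (intro that[of "[w, u2, t2]"]) (auto simp: counter_assessment_simps)
  next
    case 3
    with w u2 f show ?thesis
      by (intro that[of "[w, u2, f]"]) (auto simp: counter_assessment_simps)
  next
    case 4
    with w u1 t1 show ?thesis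
      by (intro that[of "[w, u1, t1]"]) (auto simp: counter_assessment_simps)
  next
    case 5
    with w u1 f show ?thesis
      by (intro that[of "[w, u1, f]"]) (auto simp: counter_assessment_simps)
  qed
qed

lemma fair_sequence_if_not_condition:
  assumes pc: "p_consistent [(E 1, H 1), (E 2, H 2)]" and not_cond: "\<not> p_entailment_condition E H"
  obtains ws where "\<forall>Q\<in>set (counter_assessment E H). fair_at_first ws Q"
proof -
  obtain t1 t2 g where t1: "t1 \<in> H 1" "t1 \<in> E 1" and t2: "t2 \<in> H 2" "t2 \<in> E 2"
    and g: "g \<in> H 1 \<union> H 2" "g \<in> H 1 \<longrightarrow> g \<in> E 1" "g \<in> H 2 \<longrightarrow> g \<in> E 2"
    using p_consistent_witnesses[OF pc] by blast
  have not_qc: "\<not> quasi_conj_implies E H S 3" if "S \<subseteq> {1, 2}" for S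
    using not_cond that unfolding p_entailment_condition_def by blast
  obtain f where f: "f \<in> H 3" "f \<notin> E 3"
    using not_quasi_conj_implies_witness[OF not_qc[of "{}"]] by auto
  obtain u1 where u1: "u1 \<in> H 1 \<inter> E 1 \<and> u1 \<notin> H 3 \<inter> E 3 \<or> u1 \<in> H 3 - E 3 \<and> u1 \<notin> H 1 - E 1"
    using not_quasi_conj_implies_witness[OF not_qc[of "{1}"]] by auto
  obtain u2 where u2: "u2 \<in> H 2 \<inter> E 2 \<and> u2 \<notin> H 3 \<inter> E 3 \<or> u2 \<in> H 3 - E 3 \<and> u2 \<notin> H 2 - E 2"
    using not_quasi_conj_implies_witness[OF not_qc[of "{2}"]] by auto
  obtain w where "w \<in> H 1 \<union> H 2 \<and> (w \<in> H 1 \<longrightarrow> w \<in> E 1) \<and> (w \<in> H 2 \<longrightarrow> w \<in> E 2) \<and> w \<notin> H 3 \<inter> E 3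
      \<or> w \<in> H 3 - E 3 \<and> w \<notin> (H 1 - E 1) \<union> (H 2 - E 2)"
    using not_quasi_conj_implies_witness[OF not_qc[of "{1, 2}"]] by auto
  then consider "w \<in> H 3 - E 3" "w \<in> H 1 \<longrightarrow> w \<in> E 1" "w \<in> H 2 \<longrightarrow> w \<in> E 2"
    | "w \<in> H 1 \<union> H 2" "w \<in> H 1 \<longrightarrow> w \<in> E 1" "w \<in> H 2 \<longrightarrow> w \<in> E 2" "w \<notin> H 3"
    by blast
  then show ?thesis
  proof cases
    case 1
    from fair_sequence_if_conclusion_false[OF 1 g t1 t2] that show ?thesis .
  next
    case 2
    from fair_sequence_if_conclusion_void[OF 2 f u1 u2 t1 t2] that show ?thesis .
  qed
qed

lemma counter_assessment_coherent:
  assumes "p_consistent [(E 1, H 1), (E 2, H 2)]" and "\<not> p_entailment_condition E H"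
  shows "coherent [cev (E 1) (H 1) 1, cev (E 2) (H 2) 1, cev (E 3) (H 3) 0]"
    and "coherent (iter_family E H counter_prevision 0)"
proof -
  obtain ws where "\<forall>Q\<in>set (counter_assessment E H). fair_at_first ws Q"
    using fair_sequence_if_not_condition[OF assms] by blast
  then show "coherent [cev (E 1) (H 1) 1, cev (E 2) (H 2) 1, cev (E 3) (H 3) 0]"
    and "coherent (iter_family E H counter_prevision 0)"
    by (auto intro!: coherent_if_fair_at_first)
qed

lemma p_entails_iff_condition:
  assumes pc: "p_consistent [(E 1, H 1), (E 2, H 2)]"
  shows "p_entails [(E 1, H 1), (E 2, H 2)] (E 3, H 3) \<longleftrightarrow> p_entailment_condition E H"
proof
  assume "p_entails [(E 1, H 1), (E 2, H 2)] (E 3, H 3)"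
  then show "p_entailment_condition E H"
    using counter_assessment_coherent(1)[OF pc] unfolding p_entails_def by fastforce
next
  assume "p_entailment_condition E H"
  then obtain S where "S \<subseteq> {1, 2}" "quasi_conj_implies E H S 3"
    unfolding p_entailment_condition_def by blast
  with pc show "p_entails [(E 1, H 1), (E 2, H 2)] (E 3, H 3)"
    unfolding p_entails_def using prevision_one_if_quasi_conj_implies by auto
qed

lemma iter_cond_eq_one_iff_condition:
  assumes pc: "p_consistent [(E 1, H 1), (E 2, H 2)]"
  shows "iter_cond_eq_one E H \<longleftrightarrow> p_entailment_condition E H"
proof
  assume iter: "iter_cond_eq_one E H"
  show "p_entailment_condition E H"
  proof (rule ccontr)
    assume not_cond: "\<not> p_entailment_condition E H"
    note coh = counter_assessment_coherent(2)[OF pc not_cond]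
    have "\<exists>v. conj_val E H counter_prevision {1, 2} v \<noteq> 0"
      using coherent_prevision_bounds(1)[OF coh iter_family_members(5)] by blast
    with coh have one: "iter_val E H counter_prevision 0 w = 1" for w
      using iter unfolding iter_cond_eq_one_def by blast
    obtain f where "f \<in> H 3" "f \<notin> E 3"
      using not_cond unfolding p_entailment_condition_def quasi_conj_implies_def by blast
    then have "iter_val E H counter_prevision 0 f = 0"
      by (simp add: iter_val_def conj_val_def)
    with one[of f] show False by simp
  qed
next
  assume "p_entailment_condition E H"
  then obtain S where S: "S \<subseteq> {1, 2}" and qc: "quasi_conj_implies E H S 3"
    unfolding p_entailment_condition_def by blast
  show "iter_cond_eq_one E H"
    unfolding iter_cond_eq_one_def
  proof (intro allI impI)
    fix x \<mu> w
    assume "coherent (iter_family E H x \<mu>) \<and> (\<exists>w. conj_val E H x {1, 2} w \<noteq> 0)"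
    then have coh: "coherent (iter_family E H x \<mu>)" ..
    show "iter_val E H x \<mu> w = 1"
      by (rule iter_val_eq_one_if_conj123_eq_conj12[OF coh
            conj123_eq_conj12_if_quasi_conj_implies[OF coh S qc]])
  qed
qed

theorem mainTheorem7:
  fixes E H :: "nat \<Rightarrow> 'w set"
  assumes "H 1 \<noteq> {}" and "H 2 \<noteq> {}" and "H 3 \<noteq> {}"
    and "p_consistent [(E 1, H 1), (E 2, H 2)]"
  shows "p_entails [(E 1, H 1), (E 2, H 2)] (E 3, H 3) \<longleftrightarrow> iter_cond_eq_one E H"
  using p_entails_iff_condition[OF assms(4)] iter_cond_eq_one_iff_condition[OF assms(4)] by simp

end
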